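(* Let $\Omega\subseteq\mathbb{R}^d$ be open. For every $f\in\mathcal{E}(\Omega)$ the constant net $(f)$ belongs to $\mathcal{M}(\mathcal{E}(\Omega)^{\mathcal{D}_0})$, and for every $T\in\mathcal{D}'(\Omega)$ the net $(T\circledast\varphi)_{\varphi\in\mathcal{D}_0}$ belongs to $\mathcal{M}(\mathcal{E}(\Omega)^{\mathcal{D}_0})$.
   Context: $\mathcal{E}(\Omega)=C^\infty(\Omega;\mathbb{C})$, $\mathcal{D}'(\Omega)$ the Schwartz distributions with pairing $(T|\tau)$. Fix $\mathcal{D}_0=\mathcal{D}(\mathbb{R}^d)$. For $\varphi\in\mathcal{D}_0$ let $R_\varphi=\sup\{\|x\|:\varphi(x)\neq0\}$ if $\varphi\neq0$, $R_0=1$. For $n\in\mathbb{N}$, $\mathcal{D}_n$ is the set of $\varphi\in\mathcal{D}_0$ that are real-valued, even, with $R_\varphi\le1/n$, $\int\varphi=1$, $\int x^\alpha\varphi(x)dx=0$ for $1\le|\alpha|\le n$, $\int|\varphi|\le1+1/n$, and $\sup_x|\partial^\alpha\varphi(x)|\le R_\varphi^{-2(|\alpha|+d)}$ for $|\alpha|\le n$. $\mathcal{U}$ is a fixed free ultrafilter on $\mathcal{D}_0$ containing every $\mathcal{D}_n$ (and $\mathfrak c^+$-good); "$P(\varphi)$ a.e." means $\{\varphi:P(\varphi)\}\in\mathcal{U}$. $\mathcal{M}(\mathcal{E}(\Omega)^{\mathcal{D}_0})$ is the set of nets $(f_\varphi)$, $f_\varphi\in\mathcal{E}(\Omega)$,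 such that for every compact $K\subset\Omega$ and every $\alpha\in\mathbb{N}_0^d$ there is $m\in\mathbb{N}_0$ with $\sup_{x\in K}|\partial^\alpha f_\varphi(x)|\le R_\varphi^{-m}$ a.e. Let $\widetilde\Omega_\varphi=\{x\in\Omega: d(x,\partial\Omega)>2R_\varphi,\ \|x\|<1/R_\varphi\}$, $C_{\Omega,\varphi}(x)=\int_{\widetilde\Omega_\varphi}\varphi(x-t)\,dt$, and $(T\circledast\varphi)(x)=(T(t)\,|\,C_{\Omega,\varphi}(t)\varphi(x-t))$ for $x\in\Omega$. *)

theory Defs
  imports "HOL-Analysis.Analysis"
begin

text \<open>Points of R^d are vectors of type real^'n (d = CARD('n)); functions are complex-valued.\<close>

type_synonym 'n fn = "real^'n \<Rightarrow> complex"

definition partial :: "'n::finite \<Rightarrow> 'n fn \<Rightarrow> 'n fn" where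
  "partial i f x = vector_derivative (\<lambda>t::real. f (x + t *\<^sub>R axis i 1)) (at 0)"

fun iter_partial :: "'n::finite list \<Rightarrow> 'n fn \<Rightarrow> 'n fn" where
  "iter_partial [] f = f"
| "iter_partial (i # is) f = partial i (iter_partial is f)"

definition smooth_on :: "(real^'n::finite) set \<Rightarrow> 'n fn \<Rightarrow> bool" where
  "smooth_on \<Omega> f \<longleftrightarrow>
     (\<forall>is. continuous_on \<Omega> (iter_partial is f) \<and>
       (\<forall>i. \<forall>x\<in>\<Omega>. (\<lambda>t::real. iter_partial is f (x + t *\<^sub>R axis i 1)) differentiable (at 0)))"

definition coord_list :: "'n::finite list" where
  "coord_list = (SOME xs. distinct xs \<and> set xs = UNIV)"

definition mabs :: "('n::finite \<Rightarrow> nat) \<Rightarrow> nat" where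
  "mabs \<alpha> = (\<Sum>i\<in>UNIV. \<alpha> i)"

definition dpartial :: "('n::finite \<Rightarrow> nat) \<Rightarrow> 'n fn \<Rightarrow> 'n fn" where
  "dpartial \<alpha> f = iter_partial (concat (map (\<lambda>i. replicate (\<alpha> i) i) coord_list)) f"

definition mpow :: "real^'n::finite \<Rightarrow> ('n \<Rightarrow> nat) \<Rightarrow> real" where
  "mpow x \<alpha> = (\<Prod>i\<in>UNIV. (x $ i) ^ (\<alpha> i))"

definition D0 :: "('n::finite fn) set" where
  "D0 = {\<phi>. smooth_on UNIV \<phi> \<and> bounded {x. \<phi> x \<noteq> 0}}"

definition Rphi :: "'n::finite fn \<Rightarrow> real" where
  "Rphi \<phi> = (if \<phi> = (\<lambda>_. 0) then 1 else Sup {norm x | x. \<phi> x \<noteq> 0})"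

definition Dn :: "nat \<Rightarrow> ('n::finite fn) set" where
  "Dn n = {\<phi>\<in>D0.
      (\<forall>x. Im (\<phi> x) = 0) \<and>
      (\<forall>x. \<phi> (- x) = \<phi> x) \<and>
      Rphi \<phi> \<le> 1 / real n \<and>
      (LINT x|lborel. \<phi> x) = 1 \<and>
      (\<forall>\<alpha>. 1 \<le> mabs \<alpha> \<and> mabs \<alpha> \<le> n \<longrightarrow> (LINT x|lborel. complex_of_real (mpow x \<alpha>) * \<phi> x) = 0) \<and>
      (LINT x|lborel. cmod (\<phi> x)) \<le> 1 + 1 / real n \<and>
      (\<forall>\<alpha>. mabs \<alpha> \<le> n \<longrightarrow>
          Sup (range (\<lambda>x. cmod (dpartial \<alpha> \<phi> x))) \<le> Rphi \<phi> powr (- 2 * real (mabs \<alpha> + CARD('n))))}"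

text \<open>(c^+)-good: every monotone decreasing map from finite subsets of a set of
  cardinality at most the continuum (a subset of the reals) into U has a multiplicative refinement.\<close>
definition cplus_good :: "'a set set \<Rightarrow> bool" where
  "cplus_good U \<longleftrightarrow>
    (\<forall>(A::real set) (f :: real set \<Rightarrow> 'a set).
       (\<forall>w. finite w \<and> w \<subseteq> A \<longrightarrow> f w \<in> U) \<and>
       (\<forall>w w'. finite w' \<and> w \<subseteq> w' \<and> w' \<subseteq> A \<longrightarrow> f w' \<subseteq> f w) \<longrightarrow>
       (\<exists>g. (\<forall>w. finite w \<and> w \<subseteq> A \<longrightarrow> g w \<in> U \<and> g w \<subseteq> f w) \<and>
            (\<forall>w w'. finite w \<and> finite w' \<and> w \<subseteq> A \<and> w' \<subseteq> A \<longrightarrow> g (w \<union> w') = g w \<inter> g w')))"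

definition ultrafilter_on :: "'a set \<Rightarrow> 'a set set \<Rightarrow> bool" where
  "ultrafilter_on I U \<longleftrightarrow>
     (\<forall>A\<in>U. A \<subseteq> I) \<and> I \<in> U \<and> {} \<notin> U \<and>
     (\<forall>A\<in>U. \<forall>B\<in>U. A \<inter> B \<in> U) \<and>
     (\<forall>A B. A \<in> U \<and> A \<subseteq> B \<and> B \<subseteq> I \<longrightarrow> B \<in> U) \<and>
     (\<forall>A. A \<subseteq> I \<longrightarrow> A \<in> U \<or> I - A \<in> U)"

definition free_ultrafilter_on :: "'a set \<Rightarrow> 'a set set \<Rightarrow> bool" where
  "free_ultrafilter_on I U \<longleftrightarrow> ultrafilter_on I U \<and> (\<forall>a. {a} \<notin> U)"

definition admissible_U :: "('n::finite fn) set set \<Rightarrow> bool" where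
  "admissible_U U \<longleftrightarrow> free_ultrafilter_on D0 U \<and> (\<forall>n\<ge>1. Dn n \<in> U) \<and> cplus_good U"

definition ae :: "('n::finite fn) set set \<Rightarrow> ('n fn \<Rightarrow> bool) \<Rightarrow> bool" where
  "ae U P \<longleftrightarrow> {\<phi>\<in>D0. P \<phi>} \<in> U"

text \<open>Moderate nets M(E(Omega)^{D_0}); a net is a map phi \<mapsto> f_phi (only phi in D_0 matter).\<close>
definition moderate :: "('n::finite fn) set set \<Rightarrow> (real^'n) set \<Rightarrow> ('n fn \<Rightarrow> 'n fn) \<Rightarrow> bool" where
  "moderate U \<Omega> F \<longleftrightarrow>
     (\<forall>\<phi>\<in>D0. smooth_on \<Omega> (F \<phi>)) \<and>
     (\<forall>K \<alpha>. compact K \<and> K \<subseteq> \<Omega> \<longrightarrow>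
        (\<exists>m::nat. ae U (\<lambda>\<phi>. \<forall>x\<in>K. cmod (dpartial \<alpha> (F \<phi>) x) \<le> Rphi \<phi> powr (- real m))))"

text \<open>Test functions D(Omega), extended by zero to R^d.\<close>
definition test_on :: "(real^'n::finite) set \<Rightarrow> 'n fn \<Rightarrow> bool" where
  "test_on \<Omega> \<tau> \<longleftrightarrow> smooth_on UNIV \<tau> \<and> (\<exists>K. compact K \<and> K \<subseteq> \<Omega> \<and> (\<forall>x. x \<notin> K \<longrightarrow> \<tau> x = 0))"

text \<open>Schwartz distributions: linear functionals on D(Omega), continuous for the
  inductive-limit topology (seminorm characterisation).\<close>
definition distribution :: "(real^'n::finite) set \<Rightarrow> ('n fn \<Rightarrow> complex) \<Rightarrow> bool" where
  "distribution \<Omega> T \<longleftrightarrow>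
     (\<forall>\<sigma> \<tau> a b. test_on \<Omega> \<sigma> \<and> test_on \<Omega> \<tau> \<longrightarrow>
         T (\<lambda>x. a * \<sigma> x + b * \<tau> x) = a * T \<sigma> + b * T \<tau>) \<and>
     (\<forall>K. compact K \<and> K \<subseteq> \<Omega> \<longrightarrow>
        (\<exists>C m. \<forall>\<tau>. test_on \<Omega> \<tau> \<and> (\<forall>x. x \<notin> K \<longrightarrow> \<tau> x = 0) \<longrightarrow>
           cmod (T \<tau>) \<le> C * (\<Sum>\<alpha>\<in>{\<alpha>. mabs \<alpha> \<le> m}. Sup (range (\<lambda>x. cmod (dpartial \<alpha> \<tau> x))))))"

text \<open>d(x, boundary Omega) > r, with the convention d(x, {}) = +infinity.\<close>
definition Omega_tilde :: "(real^'n::finite) set \<Rightarrow> 'n fn \<Rightarrow> (real^'n) set" where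
  "Omega_tilde \<Omega> \<phi> = {x\<in>\<Omega>. (frontier \<Omega> = {} \<or> infdist x (frontier \<Omega>) > 2 * Rphi \<phi>)
                              \<and> norm x < 1 / Rphi \<phi>}"

definition C_Omega :: "(real^'n::finite) set \<Rightarrow> 'n fn \<Rightarrow> 'n fn" where
  "C_Omega \<Omega> \<phi> x = (LINT t:Omega_tilde \<Omega> \<phi>|lborel. \<phi> (x - t))"

definition oconv :: "(real^'n::finite) set \<Rightarrow> ('n fn \<Rightarrow> complex) \<Rightarrow> 'n fn \<Rightarrow> 'n fn" where
  "oconv \<Omega> T \<phi> x = T (\<lambda>t. C_Omega \<Omega> \<phi> t * \<phi> (x - t))"

end

theory Submission
  imports Defs
begin

text \<open>
  For smooth \<open>f\<close>, each derivative is bounded on a compact set by some \<open>B\<close>, and every \<open>\<phi>\<close> in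
  \<open>D_n\<close> with \<open>n \<ge> B\<close> has \<open>B \<le> 1 / R_\<phi>\<close>.

  For a distribution, \<open>(T \<circledast> \<phi>)(x) = T(c \<cdot> \<phi>(x - \<cdot>))\<close> with the cut-off \<open>c = C_\<Omega>,\<phi>\<close>, which is a
  test function on \<open>\<Omega>\<close> because its support stays within distance \<open>R_\<phi>\<close> of the closure of
  \<open>\<Omega>~_\<phi>\<close>. Operators \<open>g \<mapsto> T(c \<cdot> g(x - \<cdot>))\<close> commute with translations and are bounded by finitely
  many sup-norms of derivatives of \<open>g\<close>; hence they map test functions to smooth functions and commute
  with derivatives, so \<open>\<partial>\<^sup>\<alpha>(T \<circledast> \<phi>)(x) = T(c \<cdot> (\<partial>\<^sup>\<alpha>\<phi>)(x - \<cdot>))\<close>. The seminorm estimate of \<open>T\<close>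
  on a compact neighbourhood of \<open>K\<close>, the Leibniz rule, and the bounds on the derivatives of \<open>\<phi>\<close>
  (and hence of \<open>c\<close>) by negative powers of \<open>R_\<phi>\<close> built into \<open>D_n\<close> give \<open>|\<partial>\<^sup>\<alpha>(T \<circledast> \<phi>)| \<le> C R_\<phi>\<^sup>-\<^sup>E\<close>
  on \<open>K\<close>; the constant \<open>C\<close> is again absorbed by one more power of \<open>1 / R_\<phi>\<close> once \<open>n \<ge> C\<close>.
\<close>

section \<open>Partial derivatives along coordinate axes\<close>

definition partially_differentiable :: "'n::finite \<Rightarrow> 'n fn \<Rightarrow> bool" where
  "partially_differentiable i g \<longleftrightarrow>
     (\<forall>x. (\<lambda>t::real. g (x + t *\<^sub>R axis i 1)) differentiable (at 0))"

lemma has_vector_derivative_partial_line: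
  assumes "partially_differentiable i g"
  shows "((\<lambda>s. g (y + s *\<^sub>R axis i 1)) has_vector_derivative partial i g (y + s *\<^sub>R axis i 1)) (at s)"
proof -
  let ?G = "\<lambda>t::real. g ((y + s *\<^sub>R axis i 1) + t *\<^sub>R axis i 1)"
  have "(?G has_vector_derivative partial i g (y + s *\<^sub>R axis i 1)) (at 0)"
    using assms vector_derivative_works unfolding partially_differentiable_def partial_def by blast
  moreover have "((\<lambda>s'. s' - s) has_vector_derivative 1) (at s)"
    by (auto intro!: derivative_eq_intros)
  ultimately have "((?G \<circ> (\<lambda>s'. s' - s)) has_vector_derivative partial i g (y + s *\<^sub>R axis i 1)) (at s)"
    using vector_diff_chain_at by fastforce
  moreover have "?G \<circ> (\<lambda>s'. s' - s) = (\<lambda>s. g (y + s *\<^sub>R axis i 1))"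
    by (rule ext) (simp add: algebra_simps)
  ultimately show ?thesis by simp
qed

lemma has_vector_derivative_partial:
  "partially_differentiable i g \<Longrightarrow>
     ((\<lambda>s. g (y + s *\<^sub>R axis i 1)) has_vector_derivative partial i g y) (at 0)"
  using has_vector_derivative_partial_line[of i g y 0] by simp

lemma partial_eqI:
  assumes "\<And>y. ((\<lambda>s. F (y + s *\<^sub>R axis i 1)) has_vector_derivative D y) (at 0)"
  shows "partial i F = D" "partially_differentiable i F"
  using assms vector_derivative_at differentiableI_vector
  unfolding partial_def partially_differentiable_def by fastforce+

lemma norm_diff_le_derivative_bound:
  fixes f :: "real \<Rightarrow> 'b::real_normed_vector"
  assumes "\<And>s. (f has_vector_derivative f' s) (at s)"
    and "\<And>s. \<bar>s\<bar> \<le> \<bar>h\<bar> \<Longrightarrow> norm (f' s) \<le> M"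
  shows "norm (f h - f 0) \<le> M * \<bar>h\<bar>"
proof -
  have seg: "\<bar>s\<bar> \<le> \<bar>h\<bar>" if "s \<in> closed_segment 0 h" for s
    using that by (auto simp: closed_segment_eq_real_ivl split: if_splits)
  have "norm (f 0 - f h) \<le> M * norm (0 - h)"
  proof (rule differentiable_bound[where S="closed_segment 0 h" and f'="\<lambda>s u. u *\<^sub>R f' s"])
    fix x assume x: "x \<in> closed_segment 0 h"
    show "(f has_derivative (\<lambda>u. u *\<^sub>R f' x)) (at x within closed_segment 0 h)"
      using assms(1)[of x] unfolding has_vector_derivative_def by (rule has_derivative_at_withinI)
    show "onorm (\<lambda>u. u *\<^sub>R f' x) \<le> M"
      using onorm_scaleR_left[OF bounded_linear_ident, of "f' x"] assms(2)[OF seg[OF x]]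
      by (simp add: onorm_id)
  qed auto
  then show ?thesis by (simp add: norm_minus_commute)
qed

lemma smooth_on_UNIV_iff:
  "smooth_on UNIV g \<longleftrightarrow>
     (\<forall>is. continuous_on UNIV (iter_partial is g) \<and> (\<forall>i. partially_differentiable i (iter_partial is g)))"
  unfolding smooth_on_def partially_differentiable_def by auto

lemma iter_partial_append: "iter_partial (as @ bs) g = iter_partial as (iter_partial bs g)"
  by (induction as) auto

lemma smooth_on_iter_partial: "smooth_on UNIV g \<Longrightarrow> smooth_on UNIV (iter_partial bs g)"
  unfolding smooth_on_UNIV_iff by (metis iter_partial_append)

lemma smooth_on_partial: "smooth_on UNIV g \<Longrightarrow> smooth_on UNIV (partial i g)"
  using smooth_on_iter_partial[of g "[i]"] by simp

lemma smooth_on_continuous_iter_partial: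
  "smooth_on UNIV g \<Longrightarrow> continuous_on UNIV (iter_partial is g)"
  unfolding smooth_on_UNIV_iff by blast

lemma smooth_on_differentiable_iter_partial:
  "smooth_on UNIV g \<Longrightarrow> partially_differentiable i (iter_partial is g)"
  unfolding smooth_on_UNIV_iff by blast

lemma smooth_on_imp_continuous: "smooth_on UNIV g \<Longrightarrow> continuous_on UNIV g"
  using smooth_on_continuous_iter_partial[of g "[]"] by simp

lemma smooth_on_imp_partially_differentiable: "smooth_on UNIV g \<Longrightarrow> partially_differentiable i g"
  using smooth_on_differentiable_iter_partial[of g i "[]"] by simp

lemma smooth_onI:
  assumes "\<And>is. iter_partial is F = G is"
    and "\<And>is. continuous_on UNIV (G is)" and "\<And>is i. partially_differentiable i (G is)"
  shows "smooth_on UNIV F"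
  unfolding smooth_on_UNIV_iff assms(1) using assms(2,3) by blast

lemma partial_lincomb:
  assumes "partially_differentiable i f" "partially_differentiable i g"
  shows "partial i (\<lambda>y. a * f y + b * g y) = (\<lambda>y. a * partial i f y + b * partial i g y)"
    and "partially_differentiable i (\<lambda>y. a * f y + b * g y)"
proof -
  have "((\<lambda>s. a * f (y + s *\<^sub>R axis i 1) + b * g (y + s *\<^sub>R axis i 1)) has_vector_derivative
          a * partial i f y + b * partial i g y) (at 0)" for y
    using has_vector_derivative_partial[OF assms(1), of y] has_vector_derivative_partial[OF assms(2), of y]
    by (auto intro!: derivative_eq_intros)
  then show "partial i (\<lambda>y. a * f y + b * g y) = (\<lambda>y. a * partial i f y + b * partial i g y)"
    and "partially_differentiable i (\<lambda>y. a * f y + b * g y)"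
    by (rule partial_eqI)+
qed

lemma partial_cmult:
  assumes "partially_differentiable i f"
  shows "partial i (\<lambda>y. a * f y) = (\<lambda>y. a * partial i f y)"
    and "partially_differentiable i (\<lambda>y. a * f y)"
  using partial_lincomb[OF assms assms, of a 0] by simp_all

lemma iter_partial_lincomb:
  assumes "smooth_on UNIV f" "smooth_on UNIV g"
  shows "iter_partial is (\<lambda>y. a * f y + b * g y) =
           (\<lambda>y. a * iter_partial is f y + b * iter_partial is g y)"
  by (induction "is")
    (simp_all add: partial_lincomb(1)[OF smooth_on_differentiable_iter_partial[OF assms(1)]
                                        smooth_on_differentiable_iter_partial[OF assms(2)]])

lemma smooth_on_lincomb:
  assumes f: "smooth_on UNIV f" and g: "smooth_on UNIV g"
  shows "smooth_on UNIV (\<lambda>y. a * f y + b * g y)"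
proof (rule smooth_onI[OF iter_partial_lincomb[OF f g]])
  show "continuous_on UNIV (\<lambda>y. a * iter_partial is f y + b * iter_partial is g y)" for "is"
    using smooth_on_continuous_iter_partial[OF f] smooth_on_continuous_iter_partial[OF g]
    by (auto intro!: continuous_intros)
  show "partially_differentiable i (\<lambda>y. a * iter_partial is f y + b * iter_partial is g y)" for "is" i
    using partial_lincomb(2)[OF smooth_on_differentiable_iter_partial[OF f]
                                smooth_on_differentiable_iter_partial[OF g]] by blast
qed

lemma partial_translate: "partial i (\<lambda>y. g (y + v)) = (\<lambda>y. partial i g (y + v))"
  unfolding partial_def by (rule ext) (simp add: algebra_simps)

lemma iter_partial_translate: "iter_partial is (\<lambda>y. g (y + v)) = (\<lambda>y. iter_partial is g (y + v))"
  by (induction "is") (auto simp: partial_translate)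

lemma partially_differentiable_translate:
  "partially_differentiable i g \<Longrightarrow> partially_differentiable i (\<lambda>y. g (y + v))"
  unfolding partially_differentiable_def
proof
  fix x assume "\<forall>x. (\<lambda>t. g (x + t *\<^sub>R axis i 1)) differentiable at 0"
  then have "(\<lambda>t. g ((x + v) + t *\<^sub>R axis i 1)) differentiable at 0" ..
  then show "(\<lambda>t. g (x + t *\<^sub>R axis i 1 + v)) differentiable at 0"
    by (simp add: algebra_simps)
qed

lemma smooth_on_translate:
  assumes g: "smooth_on UNIV g"
  shows "smooth_on UNIV (\<lambda>y. g (y + v))"
proof (rule smooth_onI[OF iter_partial_translate])
  show "continuous_on UNIV (\<lambda>y. iter_partial is g (y + v))" for "is"
    by (rule continuous_on_compose2[OF smooth_on_continuous_iter_partial[OF g] _ subset_UNIV])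
      (intro continuous_intros)
  show "partially_differentiable i (\<lambda>y. iter_partial is g (y + v))" for "is" i
    by (rule partially_differentiable_translate[OF smooth_on_differentiable_iter_partial[OF g]])
qed

lemma partial_reflect:
  assumes "partially_differentiable i w"
  shows "partial i (\<lambda>t. w (x - t)) = (\<lambda>t. - partial i w (x - t))"
    and "partially_differentiable i (\<lambda>t. w (x - t))"
proof -
  have "((\<lambda>s. w (x - (t + s *\<^sub>R axis i 1))) has_vector_derivative - partial i w (x - t)) (at 0)" for t
  proof -
    have u: "(uminus has_vector_derivative -1) (at (0::real))"
      by (auto intro!: derivative_eq_intros)
    have "(((\<lambda>s. w ((x - t) + s *\<^sub>R axis i 1)) \<circ> uminus) has_vector_derivative
           (-1) *\<^sub>R partial i w (x - t)) (at 0)"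
      using vector_diff_chain_at[OF u] has_vector_derivative_partial[OF assms, of "x - t"] by simp
    moreover have "(\<lambda>s. w ((x - t) + s *\<^sub>R axis i 1)) \<circ> uminus = (\<lambda>s. w (x - (t + s *\<^sub>R axis i 1)))"
      by (rule ext) (simp add: algebra_simps)
    ultimately show ?thesis by simp
  qed
  then show "partial i (\<lambda>t. w (x - t)) = (\<lambda>t. - partial i w (x - t))"
    and "partially_differentiable i (\<lambda>t. w (x - t))"
    by (rule partial_eqI)+
qed

lemma iter_partial_reflect:
  assumes w: "smooth_on UNIV w"
  shows "iter_partial is (\<lambda>t. w (x - t)) = (\<lambda>t. (-1) ^ length is * iter_partial is w (x - t))"
proof (induction "is")
  case (Cons i "is")
  have d: "partially_differentiable i (\<lambda>t. iter_partial is w (x - t))"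
    using partial_reflect(2)[OF smooth_on_differentiable_iter_partial[OF w]] by blast
  show ?case
    using Cons partial_cmult(1)[OF d, of "(-1) ^ length is"]
      partial_reflect(1)[OF smooth_on_differentiable_iter_partial[OF w, of i "is"], of x]
    by simp
qed simp

lemma smooth_on_reflect:
  assumes w: "smooth_on UNIV w"
  shows "smooth_on UNIV (\<lambda>t. w (x - t))"
proof (rule smooth_onI[OF iter_partial_reflect[OF w]])
  show "continuous_on UNIV (\<lambda>t. (-1) ^ length is * iter_partial is w (x - t))" for "is"
    by (intro continuous_intros continuous_on_compose2[OF smooth_on_continuous_iter_partial[OF w] _ subset_UNIV])
  show "partially_differentiable i (\<lambda>t. (-1) ^ length is * iter_partial is w (x - t))" for "is" i
    using partial_cmult(2)[OF partial_reflect(2)[OF smooth_on_differentiable_iter_partial[OF w]]] by blast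
qed

lemma partial_mult:
  assumes "partially_differentiable i f" "partially_differentiable i g"
  shows "partial i (\<lambda>t. f t * g t) = (\<lambda>t. partial i f t * g t + f t * partial i g t)"
    and "partially_differentiable i (\<lambda>t. f t * g t)"
proof -
  have "((\<lambda>s. f (y + s *\<^sub>R axis i 1) * g (y + s *\<^sub>R axis i 1)) has_vector_derivative
          partial i f y * g y + f y * partial i g y) (at 0)" for y
    using has_vector_derivative_mult[OF has_vector_derivative_partial[OF assms(1), of y]
                                        has_vector_derivative_partial[OF assms(2), of y]]
    by (simp add: algebra_simps)
  then show "partial i (\<lambda>t. f t * g t) = (\<lambda>t. partial i f t * g t + f t * partial i g t)"
    and "partially_differentiable i (\<lambda>t. f t * g t)"
    by (rule partial_eqI)+
qed

lemma partial_sum_list: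
  assumes "\<forall>p\<in>set L. partially_differentiable i (F p)"
  shows "partial i (\<lambda>t. \<Sum>p\<leftarrow>L. F p t) = (\<lambda>t. \<Sum>p\<leftarrow>L. partial i (F p) t) \<and>
         partially_differentiable i (\<lambda>t. \<Sum>p\<leftarrow>L. F p t)"
  using assms
proof (induction L)
  case Nil
  show ?case using partial_eqI[of "\<lambda>t. 0" i "\<lambda>t. 0"] by simp
next
  case (Cons p L)
  then show ?case using partial_lincomb[of i "F p" "\<lambda>t. \<Sum>p\<leftarrow>L. F p t" 1 1] by simp
qed

lemma continuous_on_sum_list:
  fixes F :: "'p \<Rightarrow> 'a::topological_space \<Rightarrow> 'b::topological_monoid_add"
  shows "\<forall>p\<in>set L. continuous_on S (F p) \<Longrightarrow> continuous_on S (\<lambda>t. \<Sum>p\<leftarrow>L. F p t)"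
  by (induction L) (auto intro!: continuous_intros)

lemma norm_sum_list_le:
  fixes F :: "'p \<Rightarrow> 'b::real_normed_vector"
  shows "\<forall>p\<in>set L. norm (F p) \<le> B \<Longrightarrow> norm (\<Sum>p\<leftarrow>L. F p) \<le> real (length L) * B"
proof (induction L)
  case (Cons a L)
  then have "norm (F a + (\<Sum>p\<leftarrow>L. F p)) \<le> B + real (length L) * B"
    by (intro order_trans[OF norm_triangle_ineq] add_mono) auto
  then show ?case by (simp add: algebra_simps)
qed simp

fun splits :: "'a list \<Rightarrow> ('a list \<times> 'a list) list" where
  "splits [] = [([], [])]"
| "splits (i # is) = map (\<lambda>p. (i # fst p, snd p)) (splits is) @ map (\<lambda>p. (fst p, i # snd p)) (splits is)"

lemma length_splits_components:
  "p \<in> set (splits is) \<Longrightarrow> length (fst p) \<le> length is \<and> length (snd p) \<le> length is"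
  by (induction "is" arbitrary: p) force+

lemma length_splits: "length (splits is) = 2 ^ length is"
  by (induction "is") auto

lemma iter_partial_mult:
  assumes f: "smooth_on UNIV f" and g: "smooth_on UNIV g"
  shows "iter_partial is (\<lambda>t. f t * g t) =
           (\<lambda>t. \<Sum>p\<leftarrow>splits is. iter_partial (fst p) f t * iter_partial (snd p) g t)"
proof (induction "is")
  case (Cons i "is")
  let ?F = "\<lambda>p t. iter_partial (fst p) f t * iter_partial (snd p) g t"
  note df = smooth_on_differentiable_iter_partial[OF f] and dg = smooth_on_differentiable_iter_partial[OF g]
  have "iter_partial (i # is) (\<lambda>t. f t * g t) = partial i (\<lambda>t. \<Sum>p\<leftarrow>splits is. ?F p t)"
    using Cons by simp
  also have "\<dots> = (\<lambda>t. \<Sum>p\<leftarrow>splits is. partial i (?F p) t)"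
    using partial_sum_list[of "splits is" i ?F] partial_mult(2)[OF df dg] by blast
  also have "\<dots> = (\<lambda>t. \<Sum>p\<leftarrow>splits (i # is). ?F p t)"
    by (simp add: partial_mult(1)[OF df dg] sum_list_addf o_def)
  finally show ?case .
qed simp

lemma smooth_on_mult:
  assumes f: "smooth_on UNIV f" and g: "smooth_on UNIV g"
  shows "smooth_on UNIV (\<lambda>t. f t * g t)"
proof (rule smooth_onI[OF iter_partial_mult[OF f g]])
  show "continuous_on UNIV (\<lambda>t. \<Sum>p\<leftarrow>splits is. iter_partial (fst p) f t * iter_partial (snd p) g t)" for "is"
    by (rule continuous_on_sum_list)
      (auto intro!: continuous_on_mult smooth_on_continuous_iter_partial f g)
  show "partially_differentiable i
          (\<lambda>t. \<Sum>p\<leftarrow>splits is. iter_partial (fst p) f t * iter_partial (snd p) g t)" for "is" i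
    using partial_sum_list[of "splits is" i "\<lambda>p t. iter_partial (fst p) f t * iter_partial (snd p) g t"]
      partial_mult(2)[OF smooth_on_differentiable_iter_partial[OF f]
                         smooth_on_differentiable_iter_partial[OF g]] by blast
qed

lemma second_difference_approx:
  fixes g :: "'n::finite fn"
  assumes g: "smooth_on UNIV g"
    and cont: "\<And>z. dist z y < \<delta> \<Longrightarrow> norm (partial j (partial i g) z - D) \<le> \<epsilon>"
    and h: "h > 0" "2 * h < \<delta>"
  shows "norm ((g (y + h *\<^sub>R axis i 1 + h *\<^sub>R axis j 1) - g (y + h *\<^sub>R axis i 1)
                - g (y + h *\<^sub>R axis j 1) + g y) - (h * h) *\<^sub>R D) \<le> \<epsilon> * h * h"
proof -
  let ?ei = "axis i 1 :: real^'n" and ?ej = "axis j 1 :: real^'n"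
  have di: "partially_differentiable i g"
    using smooth_on_imp_partially_differentiable[OF g] .
  have dji: "partially_differentiable j (partial i g)"
    using smooth_on_imp_partially_differentiable[OF smooth_on_partial[OF g]] .
  define \<phi> where "\<phi> s = g ((y + h *\<^sub>R ?ej) + s *\<^sub>R ?ei) - g (y + s *\<^sub>R ?ei) - (s * h) *\<^sub>R D" for s
  have d\<phi>: "(\<phi> has_vector_derivative
      (partial i g ((y + h *\<^sub>R ?ej) + s *\<^sub>R ?ei) - partial i g (y + s *\<^sub>R ?ei) - h *\<^sub>R D)) (at s)" for s
    unfolding \<phi>_def
    by (auto intro!: derivative_eq_intros has_vector_derivative_partial_line[OF di]
             simp: has_vector_derivative_def[symmetric])
  have "norm (partial i g ((y + h *\<^sub>R ?ej) + s *\<^sub>R ?ei) - partial i g (y + s *\<^sub>R ?ei) - h *\<^sub>R D) \<le> \<epsilon> * h"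
    if s: "\<bar>s\<bar> \<le> \<bar>h\<bar>" for s
  proof -
    define \<psi> where "\<psi> r = partial i g ((y + s *\<^sub>R ?ei) + r *\<^sub>R ?ej) - r *\<^sub>R D" for r
    have d\<psi>: "(\<psi> has_vector_derivative (partial j (partial i g) ((y + s *\<^sub>R ?ei) + r *\<^sub>R ?ej) - D)) (at r)" for r
      unfolding \<psi>_def
      by (auto intro!: derivative_eq_intros has_vector_derivative_partial_line[OF dji]
               simp: has_vector_derivative_def[symmetric])
    have "norm (\<psi> h - \<psi> 0) \<le> \<epsilon> * \<bar>h\<bar>"
    proof (rule norm_diff_le_derivative_bound[OF d\<psi>])
      fix r :: real assume r: "\<bar>r\<bar> \<le> \<bar>h\<bar>"
      have "dist ((y + s *\<^sub>R ?ei) + r *\<^sub>R ?ej) y \<le> norm (s *\<^sub>R ?ei) + norm (r *\<^sub>R ?ej)"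
        using norm_triangle_ineq[of "s *\<^sub>R ?ei" "r *\<^sub>R ?ej"] by (simp add: dist_norm)
      also have "\<dots> < \<delta>" using s r h by simp
      finally show "norm (partial j (partial i g) ((y + s *\<^sub>R ?ei) + r *\<^sub>R ?ej) - D) \<le> \<epsilon>"
        using cont by blast
    qed
    then show ?thesis using h unfolding \<psi>_def by (simp add: algebra_simps)
  qed
  then have "norm (\<phi> h - \<phi> 0) \<le> (\<epsilon> * h) * \<bar>h\<bar>"
    by (rule norm_diff_le_derivative_bound[OF d\<phi>])
  then show ?thesis using h unfolding \<phi>_def by (simp add: algebra_simps)
qed

text \<open>Schwarz's theorem: both mixed second derivatives are limits of the same second difference quotient.\<close>

lemma partial_commute:
  fixes g :: "'n::finite fn"
  assumes g: "smooth_on UNIV g"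
  shows "partial i (partial j g) = partial j (partial i g)"
proof (rule ext, rule ccontr)
  fix y
  define D1 where "D1 = partial j (partial i g) y"
  define D2 where "D2 = partial i (partial j g) y"
  define \<epsilon> where "\<epsilon> = norm (D1 - D2) / 4"
  assume "partial i (partial j g) y \<noteq> partial j (partial i g) y"
  then have \<epsilon>: "\<epsilon> > 0" unfolding \<epsilon>_def D1_def D2_def by simp
  have c1: "continuous_on UNIV (partial j (partial i g))"
    using smooth_on_continuous_iter_partial[OF g, of "[j, i]"] by simp
  obtain d1 where d1: "d1 > 0" "\<And>z. dist z y < d1 \<Longrightarrow> dist (partial j (partial i g) z) D1 < \<epsilon>"
    using c1 \<epsilon> unfolding continuous_on_iff D1_def by blast
  have c2: "continuous_on UNIV (partial i (partial j g))"
    using smooth_on_continuous_iter_partial[OF g, of "[i, j]"] by simp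
  obtain d2 where d2: "d2 > 0" "\<And>z. dist z y < d2 \<Longrightarrow> dist (partial i (partial j g) z) D2 < \<epsilon>"
    using c2 \<epsilon> unfolding continuous_on_iff D2_def by blast
  define h where "h = min d1 d2 / 4"
  have h: "h > 0" "2 * h < d1" "2 * h < d2" using d1 d2 unfolding h_def by auto
  let ?X = "g (y + h *\<^sub>R axis i 1 + h *\<^sub>R axis j 1) - g (y + h *\<^sub>R axis i 1)
              - g (y + h *\<^sub>R axis j 1) + g y"
  have A1: "norm (?X - (h * h) *\<^sub>R D1) \<le> \<epsilon> * h * h"
  proof (rule second_difference_approx[OF g _ h(1,2)])
    show "norm (partial j (partial i g) z - D1) \<le> \<epsilon>" if "dist z y < d1" for z
      using d1(2)[OF that] by (simp add: dist_norm)
  qed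
  have "norm ((g (y + h *\<^sub>R axis j 1 + h *\<^sub>R axis i 1) - g (y + h *\<^sub>R axis j 1)
                - g (y + h *\<^sub>R axis i 1) + g y) - (h * h) *\<^sub>R D2) \<le> \<epsilon> * h * h"
  proof (rule second_difference_approx[OF g _ h(1,3)])
    show "norm (partial i (partial j g) z - D2) \<le> \<epsilon>" if "dist z y < d2" for z
      using d2(2)[OF that] by (simp add: dist_norm)
  qed
  then have A2: "norm (?X - (h * h) *\<^sub>R D2) \<le> \<epsilon> * h * h"
    by (simp add: algebra_simps)
  have "(h * h) *\<^sub>R (D1 - D2) = (?X - (h * h) *\<^sub>R D2) - (?X - (h * h) *\<^sub>R D1)"
    by (simp add: algebra_simps)
  then have "(h * h) * norm (D1 - D2) = norm ((?X - (h * h) *\<^sub>R D2) - (?X - (h * h) *\<^sub>R D1))"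
    using h by (metis abs_of_pos mult_pos_pos norm_scaleR)
  also have "\<dots> \<le> norm (?X - (h * h) *\<^sub>R D2) + norm (?X - (h * h) *\<^sub>R D1)"
    by (rule norm_triangle_ineq4)
  also have "\<dots> \<le> (h * h) * (2 * \<epsilon>)"
    using A1 A2 by (simp add: algebra_simps)
  finally have "norm (D1 - D2) \<le> 2 * \<epsilon>"
    using h by (simp add: mult_le_cancel_left_pos)
  then show False using \<epsilon> unfolding \<epsilon>_def by simp
qed

lemma iter_partial_move_front:
  assumes g: "smooth_on UNIV g"
  shows "j \<in> set ks \<Longrightarrow> iter_partial ks g = iter_partial (j # remove1 j ks) g"
proof (induction ks)
  case (Cons k ks)
  show ?case
  proof (cases "k = j")
    case False
    then have "iter_partial (k # ks) g = partial k (partial j (iter_partial (remove1 j ks) g))"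
      using Cons by simp
    also have "\<dots> = partial j (partial k (iter_partial (remove1 j ks) g))"
      by (rule partial_commute[OF smooth_on_iter_partial[OF g]])
    finally show ?thesis using False by simp
  qed simp
qed simp

lemma iter_partial_perm:
  assumes g: "smooth_on UNIV g"
  shows "mset is = mset js \<Longrightarrow> iter_partial is g = iter_partial js g"
proof (induction js arbitrary: "is")
  case (Cons j js)
  then have "j \<in> set is" by (metis list.set_intros(1) set_mset_mset)
  then have "iter_partial is g = iter_partial (j # remove1 j is) g"
    by (rule iter_partial_move_front[OF g])
  also have "\<dots> = iter_partial (j # js) g"
    using Cons.IH[of "remove1 j is"] Cons.prems by simp
  finally show ?case .
qed simp

lemma iter_partial_partial_commute:
  assumes "smooth_on UNIV g"
  shows "iter_partial b (partial i g) = partial i (iter_partial b g)"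
  using iter_partial_perm[OF assms, of "b @ [i]" "i # b"] by (simp add: iter_partial_append)

lemma coord_list_UNIV: "distinct (coord_list :: 'n::finite list) \<and> set coord_list = (UNIV :: 'n set)"
  unfolding coord_list_def by (rule someI_ex) (use finite_distinct_list[of "UNIV :: 'n set"] in auto)

lemma length_dpartial_list:
  "length (concat (map (\<lambda>i. replicate (\<alpha> i) i) (coord_list :: 'n::finite list))) = mabs \<alpha>"
  using coord_list_UNIV[where 'n='n]
  by (simp add: length_concat o_def mabs_def sum_list_distinct_conv_sum_set)

lemma mset_dpartial_list:
  "mset (concat (map (\<lambda>i. replicate (count (mset l) i) i) (coord_list :: 'n::finite list))) = mset l"
proof -
  have "count (mset (concat (map (\<lambda>i. replicate (\<alpha> i) i) xs))) x = (if x \<in> set xs then \<alpha> x else 0)"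
    if "distinct xs" for xs :: "'n list" and \<alpha> x
    using that by (induction xs) (auto simp: count_eq_zero_iff)
  then show ?thesis using coord_list_UNIV[where 'n='n] by (intro multiset_eqI) simp
qed

lemma dpartial_count_mset:
  "smooth_on UNIV g \<Longrightarrow> dpartial (count (mset l)) g = iter_partial l g"
  unfolding dpartial_def by (rule iter_partial_perm[OF _ mset_dpartial_list])

lemma mabs_count_mset: "mabs (count (mset (l :: 'n::finite list))) = length l"
proof -
  have "mabs (count (mset l)) = size (mset (concat (map (\<lambda>i. replicate (count (mset l) i) i) (coord_list :: 'n list))))"
    by (simp only: size_mset length_dpartial_list)
  then show ?thesis by (simp only: mset_dpartial_list size_mset)
qed

section \<open>Smooth functions of bounded support\<close>

definition test_fun :: "'n::finite fn \<Rightarrow> bool" where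
  "test_fun g \<longleftrightarrow> smooth_on UNIV g \<and> (\<exists>B. \<forall>y. B < norm y \<longrightarrow> g y = 0)"

lemma test_fun_smooth: "test_fun g \<Longrightarrow> smooth_on UNIV g"
  unfolding test_fun_def by blast

lemma partial_eq_0_outside:
  fixes g :: "'n::finite fn"
  assumes "\<forall>y. B < norm y \<longrightarrow> g y = 0"
  shows "\<forall>y. B < norm y \<longrightarrow> partial i g y = 0"
proof (intro allI impI)
  fix y :: "real^'n" assume y: "B < norm y"
  have "((\<lambda>s. g (y + s *\<^sub>R axis i 1)) has_vector_derivative 0) (at 0)"
  proof (rule has_vector_derivative_transform_within_open[of "\<lambda>_. 0"])
    show "(0::real) \<in> ball 0 (norm y - B)" using y by simp
    fix s :: real assume "s \<in> ball 0 (norm y - B)"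
    then have "B < norm (y + s *\<^sub>R axis i 1)"
      using norm_triangle_ineq4[of "y + s *\<^sub>R axis i 1" "s *\<^sub>R axis i 1"] by simp
    then show "0 = g (y + s *\<^sub>R axis i 1)" using assms by simp
  qed auto
  then show "partial i g y = 0" unfolding partial_def by (rule vector_derivative_at)
qed

lemma iter_partial_eq_0_outside:
  "\<forall>y. B < norm y \<longrightarrow> g y = 0 \<Longrightarrow> \<forall>y. B < norm y \<longrightarrow> iter_partial l g y = 0"
  by (induction l) (simp_all add: partial_eq_0_outside)

lemma test_fun_iter_partial: "test_fun g \<Longrightarrow> test_fun (iter_partial l g)"
  unfolding test_fun_def using smooth_on_iter_partial iter_partial_eq_0_outside by blast

lemma test_fun_partial: "test_fun g \<Longrightarrow> test_fun (partial i g)"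
  using test_fun_iter_partial[of g "[i]"] by simp

lemma D0_imp_test_fun: "g \<in> D0 \<Longrightarrow> test_fun g"
  unfolding D0_def test_fun_def bounded_iff by (force simp: not_le[symmetric])

lemma test_on_imp_test_fun: "test_on \<Omega> c \<Longrightarrow> test_fun c"
  unfolding test_on_def test_fun_def
  by (metis compact_imp_bounded bounded_iff not_le)

lemma test_fun_bounded: "test_fun g \<Longrightarrow> bounded (range g)"
proof -
  assume g: "test_fun g"
  then obtain B where B: "\<forall>y. B < norm y \<longrightarrow> g y = 0" unfolding test_fun_def by blast
  have "compact (g ` cball 0 B)"
    using smooth_on_imp_continuous[OF test_fun_smooth[OF g]]
    by (intro compact_continuous_image) (auto intro: continuous_on_subset)
  moreover have "g y \<in> insert 0 (g ` cball 0 B)" for y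
    using B[rule_format, of y] by (cases "norm y \<le> B") auto
  then have "range g \<subseteq> insert 0 (g ` cball 0 B)" by blast
  ultimately show ?thesis by (meson bounded_insert bounded_subset compact_imp_bounded)
qed

lemma finite_lists_length_le_UNIV: "finite {b :: 'a::finite list. length b \<le> m}"
  using finite_lists_length_le[of "UNIV :: 'a set" m] by simp

lemma test_fun_bounded_derivatives:
  assumes "test_fun g"
  obtains M where "M \<ge> 0" "\<And>a y. length a \<le> m \<Longrightarrow> norm (iter_partial a g y) \<le> M"
proof -
  have "bounded (\<Union>a\<in>{a. length a \<le> m}. range (iter_partial a g))"
    using test_fun_bounded[OF test_fun_iter_partial[OF assms]] finite_lists_length_le_UNIV by blast
  then obtain M where M: "M > 0" "\<And>a y. length a \<le> m \<Longrightarrow> norm (iter_partial a g y) \<le> M"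
    unfolding bounded_pos by blast
  show thesis by (rule that[of M]) (use M in auto)
qed

lemma test_fun_uniformly_continuous:
  assumes "test_fun g" "\<epsilon> > 0"
  shows "eventually (\<lambda>v. \<forall>y. norm (g (y + v) - g y) \<le> \<epsilon>) (nhds 0)"
proof -
  obtain B where B: "\<forall>y. B < norm y \<longrightarrow> g y = 0" using assms unfolding test_fun_def by blast
  let ?K = "cball 0 (\<bar>B\<bar> + 1)"
  have "uniformly_continuous_on ?K g"
    using smooth_on_imp_continuous[OF test_fun_smooth[OF assms(1)]]
    by (intro compact_uniformly_continuous) (auto intro: continuous_on_subset)
  then obtain d where d: "d > 0" "\<And>x y. x \<in> ?K \<Longrightarrow> y \<in> ?K \<Longrightarrow> dist y x < d \<Longrightarrow> dist (g y) (g x) < \<epsilon>"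
    unfolding uniformly_continuous_on_def using assms(2) by metis
  have "norm (g (y + v) - g y) \<le> \<epsilon>" if v: "norm v < min d 1" for v y
  proof (cases "y \<in> ?K \<and> y + v \<in> ?K")
    case True
    then show ?thesis using d(2)[of y "y + v"] v by (simp add: dist_norm)
  next
    case False
    then have "B < norm y \<and> B < norm (y + v)"
      using v norm_triangle_ineq[of y v] norm_triangle_ineq4[of "y + v" v] by auto
    then show ?thesis using B assms(2) by simp
  qed
  then show ?thesis unfolding eventually_nhds_metric
    by (intro exI[of _ "min d 1"]) (use d(1) in auto)
qed

lemma test_fun_linearization:
  assumes g: "test_fun g" and "\<epsilon> > 0"
  shows "eventually (\<lambda>h. \<forall>y. norm (g (y + h *\<^sub>R axis i 1) - g y - h *\<^sub>R partial i g y) \<le> \<epsilon> * \<bar>h\<bar>) (at 0)"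
proof -
  have di: "partially_differentiable i g"
    using smooth_on_imp_partially_differentiable[OF test_fun_smooth[OF g]] .
  obtain d where d: "d > 0" "\<And>v. dist v 0 < d \<Longrightarrow> \<forall>y. norm (partial i g (y + v) - partial i g y) \<le> \<epsilon>"
    using test_fun_uniformly_continuous[OF test_fun_partial[OF g] assms(2)]
    unfolding eventually_nhds_metric by blast
  have "norm (g (y + h *\<^sub>R axis i 1) - g y - h *\<^sub>R partial i g y) \<le> \<epsilon> * \<bar>h\<bar>"
    if h: "\<bar>h\<bar> < d" for h :: real and y
  proof -
    define f where "f s = g (y + s *\<^sub>R axis i 1) - s *\<^sub>R partial i g y" for s
    have "(f has_vector_derivative (partial i g (y + s *\<^sub>R axis i 1) - partial i g y)) (at s)" for s
      unfolding f_def
      by (auto intro!: derivative_eq_intros has_vector_derivative_partial_line[OF di]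
               simp: has_vector_derivative_def[symmetric])
    then have "norm (f h - f 0) \<le> \<epsilon> * \<bar>h\<bar>"
      by (rule norm_diff_le_derivative_bound) (use h d(2) in auto)
    then show ?thesis unfolding f_def by (simp add: algebra_simps)
  qed
  then show ?thesis unfolding eventually_at
    by (intro exI[of _ d]) (use d(1) in auto)
qed

section \<open>Translation-invariant operators of finite order\<close>

lemma has_vector_derivative_at_0I:
  fixes f :: "real \<Rightarrow> 'b::real_normed_vector"
  assumes "\<And>\<epsilon>. \<epsilon> > 0 \<Longrightarrow> eventually (\<lambda>h. norm (f h - f 0 - h *\<^sub>R D) \<le> \<epsilon> * \<bar>h\<bar>) (at 0)"
  shows "(f has_vector_derivative D) (at 0)"
  unfolding has_vector_derivative_def has_derivative_iff_norm
proof (intro conjI bounded_linear_scaleR_left tendstoI)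
  fix e :: real assume e: "e > 0"
  have "eventually (\<lambda>h. norm (f h - f 0 - h *\<^sub>R D) \<le> e / 2 * \<bar>h\<bar> \<and> h \<noteq> 0) (at 0)"
    using assms[of "e/2"] e by (auto intro: eventually_conj eventually_neq_at_within)
  then show "eventually (\<lambda>h. dist (norm (f h - f 0 - (h - 0) *\<^sub>R D) / norm (h - 0)) 0 < e) (at 0)"
  proof eventually_elim
    case (elim h)
    moreover have "0 < e * \<bar>h\<bar>" using e elim by simp
    ultimately have "norm (f h - f 0 - h *\<^sub>R D) < e * \<bar>h\<bar>" by linarith
    then show ?case using elim by (simp add: pos_divide_less_eq)
  qed
qed

text \<open>Translation invariance and the bound reduce differentiability and continuity of \<open>L g\<close> to
  uniform estimates for the difference quotients of the derivatives of \<open>g\<close>.\<close>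

locale finite_order_operator =
  fixes L :: "'n::finite fn \<Rightarrow> 'n fn"
  assumes lincomb:
      "smooth_on UNIV u \<Longrightarrow> smooth_on UNIV v \<Longrightarrow> L (\<lambda>y. a * u y + b * v y) x = a * L u x + b * L v x"
    and translate: "L (\<lambda>y. g (y + t)) x = L g (x + t)"
    and bounded_by_derivatives: "\<exists>C\<ge>0. \<exists>m. \<forall>w x \<eta>. smooth_on UNIV w \<longrightarrow>
        (\<forall>b. length b \<le> m \<longrightarrow> (\<forall>y. norm (iter_partial b w y) \<le> \<eta>)) \<longrightarrow> norm (L w x) \<le> C * \<eta>"
begin

lemma translate_diff:
  assumes g: "smooth_on UNIV g" and w: "smooth_on UNIV w"
  shows "L (\<lambda>y. g (y + v) - g y - c *\<^sub>R w y) x = L g (x + v) - L g x - c *\<^sub>R L w x"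
    and "smooth_on UNIV (\<lambda>y. g (y + v) - g y - c *\<^sub>R w y)"
    and "iter_partial b (\<lambda>y. g (y + v) - g y - c *\<^sub>R w y) =
           (\<lambda>y. iter_partial b g (y + v) - iter_partial b g y - c *\<^sub>R iter_partial b w y)"
proof -
  have d: "smooth_on UNIV (\<lambda>y. 1 * g (y + v) + (-1) * g y)"
    by (rule smooth_on_lincomb[OF smooth_on_translate[OF g] g])
  have eq: "(\<lambda>y. g (y + v) - g y - c *\<^sub>R w y) =
              (\<lambda>y. 1 * (1 * g (y + v) + (-1) * g y) + (- of_real c) * w y)"
    by (simp add: scaleR_conv_of_real)
  show "L (\<lambda>y. g (y + v) - g y - c *\<^sub>R w y) x = L g (x + v) - L g x - c *\<^sub>R L w x"
    unfolding eq lincomb[OF d w] lincomb[OF smooth_on_translate[OF g] g] translate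
    by (simp add: scaleR_conv_of_real)
  show "smooth_on UNIV (\<lambda>y. g (y + v) - g y - c *\<^sub>R w y)"
    unfolding eq by (rule smooth_on_lincomb[OF d w])
  show "iter_partial b (\<lambda>y. g (y + v) - g y - c *\<^sub>R w y) =
          (\<lambda>y. iter_partial b g (y + v) - iter_partial b g y - c *\<^sub>R iter_partial b w y)"
    unfolding eq iter_partial_lincomb[OF d w] iter_partial_lincomb[OF smooth_on_translate[OF g] g]
      iter_partial_translate by (simp add: scaleR_conv_of_real)
qed

lemma has_vector_derivative:
  assumes g: "test_fun g"
  shows "((\<lambda>s. L g (x + s *\<^sub>R axis i 1)) has_vector_derivative L (partial i g) x) (at 0)"
proof (rule has_vector_derivative_at_0I)
  fix \<epsilon> :: real assume \<epsilon>: "\<epsilon> > 0"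
  obtain C m where C: "C \<ge> 0" and bound: "\<And>w x \<eta>. smooth_on UNIV w \<Longrightarrow>
      (\<forall>b. length b \<le> m \<longrightarrow> (\<forall>y. norm (iter_partial b w y) \<le> \<eta>)) \<Longrightarrow> norm (L w x) \<le> C * \<eta>"
    using bounded_by_derivatives by blast
  define \<epsilon>' where "\<epsilon>' = \<epsilon> / (C + 1)"
  have \<epsilon>': "\<epsilon>' > 0" "C * \<epsilon>' \<le> \<epsilon>"
    using \<epsilon> C unfolding \<epsilon>'_def by (simp, simp add: field_simps)
  have gs: "smooth_on UNIV g" using test_fun_smooth[OF g] .
  have "eventually (\<lambda>h. \<forall>b\<in>{b. length b \<le> m}. \<forall>y. norm (iter_partial b g (y + h *\<^sub>R axis i 1)
          - iter_partial b g y - h *\<^sub>R partial i (iter_partial b g) y) \<le> \<epsilon>' * \<bar>h\<bar>) (at 0)"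
    using test_fun_linearization[OF test_fun_iter_partial[OF g] \<epsilon>'(1)]
    by (intro eventually_ball_finite finite_lists_length_le_UNIV) blast
  then show "eventually (\<lambda>h. norm (L g (x + h *\<^sub>R axis i 1) - L g (x + 0 *\<^sub>R axis i 1)
               - h *\<^sub>R L (partial i g) x) \<le> \<epsilon> * \<bar>h\<bar>) (at 0)"
  proof eventually_elim
    case (elim h)
    note W = translate_diff[OF gs smooth_on_partial[OF gs], where v = "h *\<^sub>R axis i 1" and c = h]
    have "norm (L (\<lambda>y. g (y + h *\<^sub>R axis i 1) - g y - h *\<^sub>R partial i g y) x) \<le> C * (\<epsilon>' * \<bar>h\<bar>)"
      using elim by (intro bound W(2)) (simp add: W(3) iter_partial_partial_commute[OF gs])
    also have "\<dots> \<le> \<epsilon> * \<bar>h\<bar>"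
      using \<epsilon>'(2) by (simp add: mult.assoc[symmetric] mult_right_mono)
    finally show ?case by (simp add: W(1))
  qed
qed

lemma continuous:
  assumes g: "test_fun g"
  shows "continuous_on UNIV (L g)"
  unfolding continuous_on_iff
proof (intro ballI allI impI)
  fix x :: "real^'n" and \<epsilon> :: real assume \<epsilon>: "\<epsilon> > 0"
  obtain C m where C: "C \<ge> 0" and bound: "\<And>w x \<eta>. smooth_on UNIV w \<Longrightarrow>
      (\<forall>b. length b \<le> m \<longrightarrow> (\<forall>y. norm (iter_partial b w y) \<le> \<eta>)) \<Longrightarrow> norm (L w x) \<le> C * \<eta>"
    using bounded_by_derivatives by blast
  define \<epsilon>' where "\<epsilon>' = \<epsilon> / (2 * (C + 1))"
  have \<epsilon>': "\<epsilon>' > 0" "C * \<epsilon>' < \<epsilon>"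
    using \<epsilon> C unfolding \<epsilon>'_def by (simp add: add_nonneg_pos, simp add: field_simps add_nonneg_pos)
  have gs: "smooth_on UNIV g" using test_fun_smooth[OF g] .
  have "eventually (\<lambda>v. \<forall>b\<in>{b. length b \<le> m}. \<forall>y. norm (iter_partial b g (y + v) - iter_partial b g y) \<le> \<epsilon>') (nhds 0)"
    using test_fun_uniformly_continuous[OF test_fun_iter_partial[OF g] \<epsilon>'(1)]
    by (intro eventually_ball_finite finite_lists_length_le_UNIV) blast
  then obtain d where d: "d > 0" "\<And>v. dist v 0 < d \<Longrightarrow>
      \<forall>b\<in>{b. length b \<le> m}. \<forall>y. norm (iter_partial b g (y + v) - iter_partial b g y) \<le> \<epsilon>'"
    unfolding eventually_nhds_metric by blast
  have "dist (L g x') (L g x) < \<epsilon>" if "dist x' x < d" for x'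
  proof -
    note W = translate_diff[OF gs gs, where v = "x' - x" and c = 0]
    have "norm (L (\<lambda>y. g (y + (x' - x)) - g y - 0 *\<^sub>R g y) x) \<le> C * \<epsilon>'"
      using d(2)[of "x' - x"] that by (intro bound W(2)) (unfold W(3), simp add: dist_norm)
    then show ?thesis using \<epsilon>'(2) unfolding W(1) by (simp add: dist_norm)
  qed
  then show "\<exists>d>0. \<forall>x'\<in>UNIV. dist x' x < d \<longrightarrow> dist (L g x') (L g x) < \<epsilon>"
    using d(1) by blast
qed

lemma iter_partial:
  assumes g: "test_fun g"
  shows "iter_partial l (L g) = L (iter_partial l g)"
proof (induction l)
  case (Cons i l)
  have "partial i (L (iter_partial l g)) = L (partial i (iter_partial l g))"
    by (rule partial_eqI(1)[OF has_vector_derivative[OF test_fun_iter_partial[OF g]]])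
  then show ?case using Cons by simp
qed simp

lemma smooth: "test_fun g \<Longrightarrow> smooth_on UNIV (L g)"
  by (rule smooth_onI[OF iter_partial])
    (auto intro: continuous partial_eqI(2) has_vector_derivative test_fun_iter_partial)

end

definition set_conv :: "(real^'n::finite) set \<Rightarrow> 'n fn \<Rightarrow> 'n fn" where
  "set_conv A g x = (LINT t:A|lborel. g (x - t))"

lemma set_integrable_reflect:
  fixes g :: "'n::finite fn"
  assumes A: "A \<in> sets lborel" "bounded A" and g: "continuous_on UNIV g"
  shows "set_integrable lborel A (\<lambda>t. g (x - t))"
proof -
  have "continuous_on (closure A) (\<lambda>t. g (x - t))"
    by (intro continuous_on_compose2[OF g] continuous_intros) auto
  then have "set_integrable lborel (closure A) (\<lambda>t. g (x - t))"
    unfolding set_integrable_def using A(2)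
    by (intro borel_integrable_compact) (auto simp: compact_closure)
  then show ?thesis by (rule set_integrable_subset) (use A closure_subset in auto)
qed

lemma norm_set_integral_le:
  fixes f :: "'a \<Rightarrow> 'b::{banach, second_countable_topology}"
  assumes A: "A \<in> sets M" "emeasure M A < \<infinity>" and f: "set_integrable M A f"
    and bound: "\<And>t. t \<in> A \<Longrightarrow> norm (f t) \<le> \<eta>"
  shows "norm (LINT t:A|M. f t) \<le> \<eta> * measure M A"
proof -
  have "set_integrable M A (\<lambda>_. \<eta>)"
    unfolding set_integrable_def
    by (rule integrable.intros[OF has_bochner_integral_indicator[OF A]])
  then have "(LINT t:A|M. norm (f t)) \<le> (LINT t:A|M. \<eta>)"
    by (rule set_integral_mono[OF set_integrable_norm[OF f] _ bound])
  then show ?thesis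
    using set_integral_norm_bound[OF f] set_integral_const[OF A(1), of \<eta>] A(2)
    by (simp add: mult.commute)
qed

lemma finite_order_operator_set_conv:
  fixes A :: "(real^'n::finite) set"
  assumes A: "A \<in> sets lborel" "bounded A"
  shows "finite_order_operator (set_conv A)"
proof
  fix u v :: "'n fn" and a b x
  assume "smooth_on UNIV u" "smooth_on UNIV v"
  then have "set_integrable lborel A (\<lambda>t. a * u (x - t))" "set_integrable lborel A (\<lambda>t. b * v (x - t))"
    using set_integrable_reflect[OF A smooth_on_imp_continuous] by simp_all
  then show "set_conv A (\<lambda>y. a * u y + b * v y) x = a * set_conv A u x + b * set_conv A v x"
    unfolding set_conv_def by simp
next
  show "set_conv A (\<lambda>y. g (y + t)) x = set_conv A g (x + t)" for g t x
    unfolding set_conv_def by (simp add: algebra_simps)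
next
  show "\<exists>C\<ge>0. \<exists>m. \<forall>w x \<eta>. smooth_on UNIV w \<longrightarrow>
      (\<forall>b. length b \<le> m \<longrightarrow> (\<forall>y. norm (iter_partial b w y) \<le> \<eta>)) \<longrightarrow> norm (set_conv A w x) \<le> C * \<eta>"
  proof (intro exI[of _ "measure lborel A"] exI[of _ "0::nat"] conjI allI impI)
    fix w :: "'n fn" and x \<eta>
    assume w: "smooth_on UNIV w" and "\<forall>b. length b \<le> 0 \<longrightarrow> (\<forall>y. norm (iter_partial b w y) \<le> \<eta>)"
    then have "norm (w y) \<le> \<eta>" for y by (metis iter_partial.simps(1) list.size(3) order_refl)
    then show "norm (set_conv A w x) \<le> measure lborel A * \<eta>"
      using norm_set_integral_le[OF A(1) emeasure_bounded_finite[OF A(2)]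
          set_integrable_reflect[OF A smooth_on_imp_continuous[OF w]]]
      unfolding set_conv_def by (simp add: mult.commute)
  qed simp
qed

definition cutoff_conv :: "('n::finite fn \<Rightarrow> complex) \<Rightarrow> 'n fn \<Rightarrow> 'n fn \<Rightarrow> 'n fn" where
  "cutoff_conv T c g x = T (\<lambda>t. c t * g (x - t))"

lemma test_on_mult_reflect:
  assumes c: "test_on \<Omega> c" and w: "smooth_on UNIV w"
  shows "test_on \<Omega> (\<lambda>t. c t * w (x - t))"
  using c smooth_on_mult[OF _ smooth_on_reflect[OF w]] unfolding test_on_def by auto

lemma iter_partial_mult_reflect_bound:
  assumes c: "smooth_on UNIV c" and w: "smooth_on UNIV w"
    and bc: "\<forall>a. length a \<le> m \<longrightarrow> (\<forall>t. norm (iter_partial a c t) \<le> Mc)"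
    and bw: "\<forall>b. length b \<le> m \<longrightarrow> (\<forall>y. norm (iter_partial b w y) \<le> \<eta>)"
    and L: "length L \<le> m"
  shows "norm (iter_partial L (\<lambda>t. c t * w (x - t)) t) \<le> 2 ^ m * Mc * \<eta>"
proof -
  let ?term = "\<lambda>p. iter_partial (fst p) c t * ((-1) ^ length (snd p) * iter_partial (snd p) w (x - t))"
  have Mc: "Mc \<ge> 0" using bc[rule_format, of "[]" t] by (auto intro: order_trans[OF norm_ge_zero])
  have \<eta>: "\<eta> \<ge> 0" using bw[rule_format, of "[]" t] by (auto intro: order_trans[OF norm_ge_zero])
  have "iter_partial L (\<lambda>t. c t * w (x - t)) t = (\<Sum>p\<leftarrow>splits L. ?term p)"
    by (simp add: iter_partial_mult[OF c smooth_on_reflect[OF w]] iter_partial_reflect[OF w])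
  moreover have "\<forall>p\<in>set (splits L). norm (?term p) \<le> Mc * \<eta>"
  proof
    fix p assume "p \<in> set (splits L)"
    then have "length (fst p) \<le> m" "length (snd p) \<le> m"
      using length_splits_components L by fastforce+
    then show "norm (?term p) \<le> Mc * \<eta>"
      using bc bw Mc by (auto simp: norm_mult norm_power intro!: mult_mono)
  qed
  ultimately have "norm (iter_partial L (\<lambda>t. c t * w (x - t)) t) \<le> 2 ^ length L * (Mc * \<eta>)"
    using norm_sum_list_le[of "splits L" ?term] by (simp add: length_splits)
  also have "\<dots> \<le> 2 ^ m * (Mc * \<eta>)"
    using L Mc \<eta> by (intro mult_right_mono) auto
  finally show ?thesis by (simp add: mult_ac)
qed

lemma Sup_range_norm_le:
  assumes "\<And>t. norm (f t) \<le> B"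
  shows "0 \<le> Sup (range (\<lambda>t. norm (f t))) \<and> Sup (range (\<lambda>t. norm (f t))) \<le> B"
proof
  have "norm (f undefined) \<le> Sup (range (\<lambda>t. norm (f t)))"
    using assms by (intro cSUP_upper bdd_aboveI2) auto
  then show "0 \<le> Sup (range (\<lambda>t. norm (f t)))" by (rule order_trans[OF norm_ge_zero])
  show "Sup (range (\<lambda>t. norm (f t))) \<le> B"
    using assms by (intro cSUP_least) auto
qed

text \<open>The Leibniz rule turns the seminorm estimate of \<open>T\<close> on \<open>K\<close> into a bound that is uniform in
  the cut-off \<open>c\<close>.\<close>

lemma distribution_cutoff_conv_bound:
  fixes T :: "'n::finite fn \<Rightarrow> complex"
  assumes T: "distribution \<Omega> T" and K: "compact K" "K \<subseteq> \<Omega>"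
  obtains C m where "C \<ge> 0"
    "\<And>c w x Mc \<eta>. test_on \<Omega> c \<Longrightarrow> smooth_on UNIV w \<Longrightarrow> (\<forall>t. t \<notin> K \<longrightarrow> c t * w (x - t) = 0) \<Longrightarrow>
       (\<forall>a. length a \<le> m \<longrightarrow> (\<forall>t. norm (iter_partial a c t) \<le> Mc)) \<Longrightarrow>
       (\<forall>b. length b \<le> m \<longrightarrow> (\<forall>y. norm (iter_partial b w y) \<le> \<eta>)) \<Longrightarrow>
       norm (cutoff_conv T c w x) \<le> C * Mc * \<eta>"
proof -
  obtain C0 m where C0: "\<forall>\<tau>. test_on \<Omega> \<tau> \<and> (\<forall>x. x \<notin> K \<longrightarrow> \<tau> x = 0) \<longrightarrow>
      cmod (T \<tau>) \<le> C0 * (\<Sum>\<alpha>\<in>{\<alpha>. mabs \<alpha> \<le> m}. Sup (range (\<lambda>x. cmod (dpartial \<alpha> \<tau> x))))"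
    using T K unfolding distribution_def by blast
  define N where "N = card {\<alpha>::'n \<Rightarrow> nat. mabs \<alpha> \<le> m}"
  have bound: "norm (cutoff_conv T c w x) \<le> (\<bar>C0\<bar> * real N * 2 ^ m) * Mc * \<eta>"
    if c: "test_on \<Omega> c" and w: "smooth_on UNIV w" and supp: "\<forall>t. t \<notin> K \<longrightarrow> c t * w (x - t) = 0"
      and bc: "\<forall>a. length a \<le> m \<longrightarrow> (\<forall>t. norm (iter_partial a c t) \<le> Mc)"
      and bw: "\<forall>b. length b \<le> m \<longrightarrow> (\<forall>y. norm (iter_partial b w y) \<le> \<eta>)" for c w x Mc \<eta>
  proof -
    let ?\<tau> = "\<lambda>t. c t * w (x - t)"
    let ?S = "\<lambda>\<alpha>. Sup (range (\<lambda>t. cmod (dpartial \<alpha> ?\<tau> t)))"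
    have "cmod (dpartial \<alpha> ?\<tau> t) \<le> 2 ^ m * Mc * \<eta>" if "mabs \<alpha> \<le> m" for \<alpha> t
      unfolding dpartial_def
      by (rule iter_partial_mult_reflect_bound[OF _ w bc bw])
        (use c that in \<open>auto simp: test_on_def length_dpartial_list\<close>)
    then have S: "0 \<le> ?S \<alpha> \<and> ?S \<alpha> \<le> 2 ^ m * Mc * \<eta>" if "\<alpha> \<in> {\<alpha>. mabs \<alpha> \<le> m}" for \<alpha>
      using that by (intro Sup_range_norm_le) simp
    have "cmod (T ?\<tau>) \<le> C0 * (\<Sum>\<alpha>\<in>{\<alpha>. mabs \<alpha> \<le> m}. ?S \<alpha>)"
      using C0 test_on_mult_reflect[OF c w] supp by blast
    also have "\<dots> \<le> \<bar>C0\<bar> * (\<Sum>\<alpha>\<in>{\<alpha>. mabs \<alpha> \<le> m}. ?S \<alpha>)"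
      using S by (intro mult_right_mono sum_nonneg) auto
    also have "\<dots> \<le> \<bar>C0\<bar> * (real N * (2 ^ m * Mc * \<eta>))"
      unfolding N_def using S by (intro mult_left_mono sum_bounded_above) auto
    finally show ?thesis unfolding cutoff_conv_def by (simp add: mult_ac)
  qed
  show ?thesis by (rule that[of "\<bar>C0\<bar> * real N * 2 ^ m" m]) (simp, use bound in blast)
qed

lemma finite_order_operator_cutoff_conv:
  fixes T :: "'n::finite fn \<Rightarrow> complex"
  assumes T: "distribution \<Omega> T" and c: "test_on \<Omega> c"
  shows "finite_order_operator (cutoff_conv T c)"
proof
  fix u v :: "'n fn" and a b x
  assume "smooth_on UNIV u" "smooth_on UNIV v"
  then have "T (\<lambda>t. a * (c t * u (x - t)) + b * (c t * v (x - t))) =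
               a * T (\<lambda>t. c t * u (x - t)) + b * T (\<lambda>t. c t * v (x - t))"
    using T test_on_mult_reflect[OF c] unfolding distribution_def by blast
  then show "cutoff_conv T c (\<lambda>y. a * u y + b * v y) x = a * cutoff_conv T c u x + b * cutoff_conv T c v x"
    unfolding cutoff_conv_def by (simp add: algebra_simps)
next
  show "cutoff_conv T c (\<lambda>y. g (y + t)) x = cutoff_conv T c g (x + t)" for g t x
    unfolding cutoff_conv_def by (simp add: algebra_simps)
next
  obtain K where K: "compact K" "K \<subseteq> \<Omega>" "\<forall>t. t \<notin> K \<longrightarrow> c t = 0"
    using c unfolding test_on_def by blast
  obtain C m where C: "C \<ge> 0"
    "\<And>c w x Mc \<eta>. test_on \<Omega> c \<Longrightarrow> smooth_on UNIV w \<Longrightarrow> (\<forall>t. t \<notin> K \<longrightarrow> c t * w (x - t) = 0) \<Longrightarrow>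
       (\<forall>a. length a \<le> m \<longrightarrow> (\<forall>t. norm (iter_partial a c t) \<le> Mc)) \<Longrightarrow>
       (\<forall>b. length b \<le> m \<longrightarrow> (\<forall>y. norm (iter_partial b w y) \<le> \<eta>)) \<Longrightarrow>
       norm (cutoff_conv T c w x) \<le> C * Mc * \<eta>"
    using distribution_cutoff_conv_bound[OF T K(1,2)] by metis
  obtain Mc where Mc: "Mc \<ge> 0" "\<And>a t. length a \<le> m \<Longrightarrow> norm (iter_partial a c t) \<le> Mc"
    using test_fun_bounded_derivatives[OF test_on_imp_test_fun[OF c]] by metis
  have "norm (cutoff_conv T c w x) \<le> (C * Mc) * \<eta>"
    if "smooth_on UNIV w" "\<forall>b. length b \<le> m \<longrightarrow> (\<forall>y. norm (iter_partial b w y) \<le> \<eta>)" for w x \<eta>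
    by (rule C(2)[OF c that(1) _ _ that(2)]) (use K(3) Mc(2) in auto)
  then show "\<exists>C\<ge>0. \<exists>m. \<forall>w x \<eta>. smooth_on UNIV w \<longrightarrow>
      (\<forall>b. length b \<le> m \<longrightarrow> (\<forall>y. norm (iter_partial b w y) \<le> \<eta>)) \<longrightarrow>
      norm (cutoff_conv T c w x) \<le> C * \<eta>"
    using C(1) Mc(1) by (intro exI[of _ "C * Mc"] conjI exI[of _ m]) auto
qed

section \<open>Regularization of a distribution\<close>

lemma norm_le_Rphi: "\<phi> \<in> D0 \<Longrightarrow> \<phi> y \<noteq> 0 \<Longrightarrow> norm y \<le> Rphi \<phi>"
  unfolding D0_def Rphi_def bounded_iff
  by (auto intro!: cSup_upper bdd_aboveI)

lemma Rphi_pos: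
  fixes \<phi> :: "'n::finite fn"
  assumes \<phi>: "\<phi> \<in> D0"
  shows "Rphi \<phi> > 0"
proof (cases "\<phi> = (\<lambda>_. 0)")
  case False
  then obtain x0 where x0: "\<phi> x0 \<noteq> 0" by auto
  have "\<exists>x. \<phi> x \<noteq> 0 \<and> x \<noteq> 0"
  proof (cases "x0 = 0")
    case True
    have "continuous_on UNIV \<phi>"
      using smooth_on_imp_continuous \<phi> unfolding D0_def by blast
    then obtain d where d: "d > 0" "\<And>x. dist x x0 < d \<Longrightarrow> dist (\<phi> x) (\<phi> x0) < norm (\<phi> x0)"
      using x0 unfolding continuous_on_iff by (metis UNIV_I zero_less_norm_iff)
    define x where "x = (d / 2) *\<^sub>R (axis undefined 1 :: real^'n)"
    have "norm x = d / 2" unfolding x_def using d(1) by simp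
    then have "\<phi> x \<noteq> 0" "x \<noteq> 0"
      using d(1) d(2)[of x] True by (auto simp: dist_norm)
    then show ?thesis by blast
  qed (use x0 in blast)
  then obtain x where "\<phi> x \<noteq> 0" "norm x > 0" by auto
  then show ?thesis using norm_le_Rphi[OF \<phi>, of x] by linarith
qed (simp add: Rphi_def)

lemma Omega_tilde_open:
  assumes "open \<Omega>"
  shows "open (Omega_tilde \<Omega> \<phi>)"
proof -
  have "Omega_tilde \<Omega> \<phi> = \<Omega> \<inter> ({x. frontier \<Omega> = {}} \<union> {x. 2 * Rphi \<phi> < infdist x (frontier \<Omega>)})
                                 \<inter> {x. norm x < 1 / Rphi \<phi>}"
    unfolding Omega_tilde_def by auto
  also have "open \<dots>"
    using assms by (intro open_Int open_Un open_Collect_less continuous_intros) auto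
  finally show ?thesis .
qed

lemma Omega_tilde_bounded: "bounded (Omega_tilde \<Omega> \<phi>)"
  by (rule bounded_subset[of "cball 0 (1 / Rphi \<phi>)"]) (auto simp: Omega_tilde_def)

text \<open>Every point of the closure of \<open>Omega_tilde \<Omega> \<phi>\<close> has distance at least \<open>2 Rphi \<phi>\<close> from the
  boundary, so a segment of length \<open>Rphi \<phi>\<close> starting there cannot leave \<open>\<Omega>\<close>.\<close>

lemma closure_Omega_tilde_add:
  fixes \<Omega> :: "(real^'n::finite) set"
  assumes R: "Rphi \<phi> > 0" and z: "z \<in> closure (Omega_tilde \<Omega> \<phi>)" and v: "norm v \<le> Rphi \<phi>"
  shows "z + v \<in> \<Omega>"
proof (rule ccontr)
  assume "z + v \<notin> \<Omega>"
  let ?F = "frontier \<Omega>" and ?R = "Rphi \<phi>"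
  have far: "p \<notin> ?F" if "dist p z \<le> ?R" for p
  proof
    assume p: "p \<in> ?F"
    have "closure (Omega_tilde \<Omega> \<phi>) \<subseteq> {x. 2 * ?R \<le> infdist x ?F}"
      using p by (intro closure_minimal) (auto simp: Omega_tilde_def intro!: closed_Collect_le continuous_intros)
    then have "2 * ?R \<le> infdist z ?F" using z by blast
    also have "\<dots> \<le> infdist p ?F + dist z p" by (rule infdist_triangle)
    also have "\<dots> \<le> ?R" using p that by (simp add: dist_commute)
    finally show False using R by simp
  qed
  have "z \<in> closure \<Omega>"
    using z closure_mono[of "Omega_tilde \<Omega> \<phi>" \<Omega>] unfolding Omega_tilde_def by blast
  then have "z \<in> \<Omega>"
    using far[of z] R closure_Un_frontier[of \<Omega>] by auto
  then obtain p where p: "p \<in> closed_segment z (z + v)" "p \<in> ?F"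
    using connected_Int_frontier[of "closed_segment z (z + v)" \<Omega>] \<open>z + v \<notin> \<Omega>\<close> by auto
  then have "dist p z \<le> norm v"
    using dist_in_closed_segment[OF p(1)] by (simp add: dist_norm)
  then show False using far p(2) v by force
qed

lemma C_Omega_eq_set_conv: "C_Omega \<Omega> \<phi> = set_conv (Omega_tilde \<Omega> \<phi>) \<phi>"
  unfolding C_Omega_def set_conv_def by (rule ext) simp

lemma oconv_eq_cutoff_conv: "oconv \<Omega> T \<phi> = cutoff_conv T (C_Omega \<Omega> \<phi>) \<phi>"
  unfolding oconv_def cutoff_conv_def by (rule ext) simp

lemma finite_order_operator_C_Omega:
  "open \<Omega> \<Longrightarrow> finite_order_operator (set_conv (Omega_tilde \<Omega> \<phi>))"
  using Omega_tilde_open Omega_tilde_bounded by (intro finite_order_operator_set_conv) auto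

lemma test_on_C_Omega:
  fixes \<Omega> :: "(real^'n::finite) set"
  assumes \<Omega>: "open \<Omega>" and \<phi>: "\<phi> \<in> D0"
  shows "test_on \<Omega> (C_Omega \<Omega> \<phi>)"
proof -
  let ?A = "Omega_tilde \<Omega> \<phi>" and ?R = "Rphi \<phi>"
  define K where "K = {x + y | x y. x \<in> closure ?A \<and> y \<in> cball 0 ?R}"
  have "compact K" unfolding K_def
    using Omega_tilde_bounded by (intro compact_sums) (auto simp: compact_closure)
  moreover have "K \<subseteq> \<Omega>" unfolding K_def
    using closure_Omega_tilde_add[OF Rphi_pos[OF \<phi>]] by auto
  moreover have "C_Omega \<Omega> \<phi> x = 0" if "x \<notin> K" for x
  proof -
    have "\<phi> (x - t) = 0" if "t \<in> ?A" for t
    proof (rule ccontr)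
      assume "\<phi> (x - t) \<noteq> 0"
      then have "x \<in> K" unfolding K_def
        using norm_le_Rphi[OF \<phi>] closure_subset \<open>t \<in> ?A\<close>
        by (intro CollectI exI[of _ t] exI[of _ "x - t"]) auto
      then show False using \<open>x \<notin> K\<close> by blast
    qed
    then have "(\<lambda>t. indicator ?A t *\<^sub>R \<phi> (x - t)) = (\<lambda>_. 0)"
      by (auto simp: indicator_def)
    then show ?thesis unfolding C_Omega_def set_lebesgue_integral_def by simp
  qed
  moreover have "smooth_on UNIV (C_Omega \<Omega> \<phi>)"
    unfolding C_Omega_eq_set_conv
    by (rule finite_order_operator.smooth[OF finite_order_operator_C_Omega[OF \<Omega>] D0_imp_test_fun[OF \<phi>]])
  ultimately show ?thesis unfolding test_on_def by blast
qed

lemma smooth_on_oconv: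
  assumes \<Omega>: "open \<Omega>" and T: "distribution \<Omega> T" and \<phi>: "\<phi> \<in> D0"
  shows "smooth_on \<Omega> (oconv \<Omega> T \<phi>)"
proof -
  have "smooth_on UNIV (oconv \<Omega> T \<phi>)"
    unfolding oconv_eq_cutoff_conv
    by (rule finite_order_operator.smooth[OF finite_order_operator_cutoff_conv[OF T test_on_C_Omega[OF \<Omega> \<phi>]]
          D0_imp_test_fun[OF \<phi>]])
  then show ?thesis unfolding smooth_on_def using continuous_on_subset by blast
qed

section \<open>Moderateness\<close>

lemma ae_if_Dn:
  assumes U: "admissible_U U" and n: "n \<ge> 1" and P: "\<And>\<phi>. \<phi> \<in> Dn n \<Longrightarrow> P \<phi>"
  shows "ae U P"
proof -
  have "Dn n \<in> U" "Dn n \<subseteq> {\<phi>\<in>D0. P \<phi>}"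
    using U n P unfolding admissible_U_def Dn_def by auto
  then show ?thesis
    using U unfolding ae_def admissible_U_def free_ultrafilter_on_def ultrafilter_on_def by blast
qed

lemma Dn_Rphi:
  assumes "\<phi> \<in> Dn n" "n \<ge> 1"
  shows "\<phi> \<in> D0" "0 < Rphi \<phi>" "Rphi \<phi> \<le> 1 / real n"
  using assms Rphi_pos unfolding Dn_def by auto

lemma mult_powr_le_powr_add_1:
  assumes R: "0 < R" "R \<le> 1 / real n" and n: "n \<ge> 1" and B: "B \<le> real n"
  shows "B * R powr (- E) \<le> R powr (- (E + 1))"
proof -
  have "B * R \<le> real n * R" using B R(1) by (simp add: mult_right_mono)
  also have "\<dots> \<le> 1" using R n by (simp add: field_simps)
  finally have "B \<le> R powr (-1)"
    using R(1) by (simp add: powr_minus_divide field_simps)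
  then have "B * R powr (- E) \<le> R powr (-1) * R powr (- E)"
    by (intro mult_right_mono) auto
  also have "\<dots> = R powr (- (E + 1))"
    unfolding powr_add[symmetric] by (rule arg_cong[where f="\<lambda>a. R powr a"]) simp
  finally show ?thesis .
qed

lemma moderate_const:
  fixes \<Omega> :: "(real^'n::finite) set"
  assumes U: "admissible_U U" and f: "smooth_on \<Omega> f"
  shows "moderate U \<Omega> (\<lambda>\<phi>. f)"
  unfolding moderate_def
proof (intro conjI ballI allI impI)
  fix K :: "(real^'n) set" and \<alpha> :: "'n \<Rightarrow> nat" assume K: "compact K \<and> K \<subseteq> \<Omega>"
  have "continuous_on K (dpartial \<alpha> f)"
    using f K unfolding smooth_on_def dpartial_def using continuous_on_subset by blast
  then obtain B where B: "\<And>x. x \<in> K \<Longrightarrow> norm (dpartial \<alpha> f x) \<le> B"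
    using continuous_on_compact_bound[of K] K by blast
  define n where "n = nat \<lceil>B\<rceil> + 1"
  have n: "n \<ge> 1" "B \<le> real n" unfolding n_def by linarith+
  have "ae U (\<lambda>\<phi>. \<forall>x\<in>K. cmod (dpartial \<alpha> f x) \<le> Rphi \<phi> powr (- real (1::nat)))"
  proof (rule ae_if_Dn[OF U n(1)])
    fix \<phi> assume \<phi>: "\<phi> \<in> Dn n"
    have "B * Rphi \<phi> powr (- 0) \<le> Rphi \<phi> powr (- (0 + 1))"
      by (rule mult_powr_le_powr_add_1[OF Dn_Rphi(2,3)[OF \<phi> n(1)] n])
    then show "\<forall>x\<in>K. cmod (dpartial \<alpha> f x) \<le> Rphi \<phi> powr (- real (1::nat))"
      using B Dn_Rphi(2)[OF \<phi> n(1)] by force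
  qed
  then show "\<exists>m. ae U (\<lambda>\<phi>. \<forall>x\<in>K. cmod (dpartial \<alpha> f x) \<le> Rphi \<phi> powr (- real m))" by blast
qed (rule f)

lemma Dn_iter_partial_bound:
  fixes \<phi> :: "'n::finite fn"
  assumes \<phi>: "\<phi> \<in> Dn n" and n: "n \<ge> 1" and k: "length l \<le> k" "k \<le> n"
  shows "norm (iter_partial l \<phi> y) \<le> Rphi \<phi> powr (- 2 * real (k + CARD('n)))"
proof -
  have sm: "smooth_on UNIV \<phi>" and tf: "test_fun \<phi>"
    using D0_imp_test_fun \<phi> test_fun_smooth unfolding Dn_def by blast+
  have "1 / real n \<le> 1" using n by simp
  then have R: "0 < Rphi \<phi>" "Rphi \<phi> \<le> 1" using Dn_Rphi[OF \<phi> n] by auto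
  have "norm (iter_partial l \<phi> y) \<le> Sup (range (\<lambda>x. cmod (iter_partial l \<phi> x)))"
    using test_fun_bounded[OF test_fun_iter_partial[OF tf]]
    by (intro cSUP_upper bounded_imp_bdd_above) (auto simp: bounded_norm_comp image_image)
  also have "\<dots> \<le> Rphi \<phi> powr (- 2 * real (length l + CARD('n)))"
    using \<phi> k unfolding Dn_def dpartial_count_mset[OF sm, symmetric] mabs_count_mset[symmetric] by auto
  also have "\<dots> \<le> Rphi \<phi> powr (- 2 * real (k + CARD('n)))"
    using k R by (intro powr_mono') auto
  finally show ?thesis .
qed

lemma iter_partial_C_Omega_bound:
  fixes \<Omega> :: "(real^'n::finite) set"
  assumes \<Omega>: "open \<Omega>" and \<phi>: "\<phi> \<in> Dn n" and n: "n \<ge> 1" and k: "length a \<le> k" "k \<le> n"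
  shows "norm (iter_partial a (C_Omega \<Omega> \<phi>) t) \<le>
           measure lborel (cball (0::real^'n) 1) * Rphi \<phi> powr (- 2 * real (k + CARD('n)))"
proof -
  let ?A = "Omega_tilde \<Omega> \<phi>" and ?R = "Rphi \<phi>" and ?G = "iter_partial a \<phi>"
  let ?B = "?A \<inter> cball t ?R"
  have "1 / real n \<le> 1" using n by simp
  then have D: "\<phi> \<in> D0" and R: "?R > 0" "?R \<le> 1" using Dn_Rphi[OF \<phi> n] by auto
  have A: "?A \<in> sets lborel" "bounded ?A"
    using Omega_tilde_open[OF \<Omega>] Omega_tilde_bounded by auto
  have B: "?B \<in> sets lborel" "emeasure lborel ?B < \<infinity>"
    using A emeasure_bounded_finite[of ?B] by auto
  have zero: "?G y = 0" if "?R < norm y" for y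
    using iter_partial_eq_0_outside[of ?R \<phi> a] norm_le_Rphi[OF D] that by force
  have "iter_partial a (C_Omega \<Omega> \<phi>) t = set_conv ?A ?G t"
    unfolding C_Omega_eq_set_conv finite_order_operator.iter_partial[OF finite_order_operator_C_Omega[OF \<Omega>]
        D0_imp_test_fun[OF D]] ..
  also have "\<dots> = (LINT s:?B|lborel. ?G (t - s))"
    unfolding set_conv_def set_lebesgue_integral_def
    by (intro Bochner_Integration.integral_cong) (auto simp: indicator_def dist_norm zero)
  moreover have "set_integrable lborel ?B (\<lambda>s. ?G (t - s))"
    using smooth_on_iter_partial[OF test_fun_smooth[OF D0_imp_test_fun[OF D]]]
    by (intro set_integrable_subset[OF set_integrable_reflect[OF A smooth_on_imp_continuous] B(1)]) auto
  ultimately have "norm (iter_partial a (C_Omega \<Omega> \<phi>) t) \<le>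
                  Rphi \<phi> powr (- 2 * real (k + CARD('n))) * measure lborel ?B"
    using norm_set_integral_le[OF B, of "\<lambda>s. ?G (t - s)"] Dn_iter_partial_bound[OF \<phi> n k] by simp
  moreover have "measure lborel ?B \<le> measure lborel (cball t 1)"
    using B(1) R by (intro measure_mono_fmeasurable) (auto intro: fmeasurableI emeasure_lborel_cball_finite)
  moreover have "measure lborel (cball t 1) = measure lborel (cball (0::real^'n) 1)"
    using content_ball_conv_unit_ball[of 1 t] content_ball_conv_unit_ball[of 1 "0::real^'n"]
    by (simp add: content_cball_conv_ball)
  ultimately show ?thesis
    by (smt (verit, best) mult.commute mult_left_mono powr_ge_zero)
qed

lemma dpartial_oconv_bound:
  fixes \<Omega> :: "(real^'n::finite) set"
  assumes \<Omega>: "open \<Omega>" and T: "distribution \<Omega> T" and K: "compact K" "K \<subseteq> \<Omega>"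
  shows "\<exists>C m. \<forall>n \<phi> x. \<phi> \<in> Dn n \<longrightarrow> n \<ge> 1 \<longrightarrow> m + mabs \<alpha> \<le> n \<longrightarrow> cball x (Rphi \<phi>) \<subseteq> K \<longrightarrow>
           cmod (dpartial \<alpha> (oconv \<Omega> T \<phi>) x) \<le> C * Rphi \<phi> powr (- real (4 * m + 2 * mabs \<alpha> + 4 * CARD('n)))"
proof -
  obtain C m where C: "C \<ge> 0"
    "\<And>c w x Mc \<eta>. test_on \<Omega> c \<Longrightarrow> smooth_on UNIV w \<Longrightarrow> (\<forall>t. t \<notin> K \<longrightarrow> c t * w (x - t) = 0) \<Longrightarrow>
       (\<forall>a. length a \<le> m \<longrightarrow> (\<forall>t. norm (iter_partial a c t) \<le> Mc)) \<Longrightarrow>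
       (\<forall>b. length b \<le> m \<longrightarrow> (\<forall>y. norm (iter_partial b w y) \<le> \<eta>)) \<Longrightarrow>
       norm (cutoff_conv T c w x) \<le> C * Mc * \<eta>"
    using distribution_cutoff_conv_bound[OF T K] by metis
  define V where "V = measure lborel (cball (0::real^'n) 1)"
  define La where "La = concat (map (\<lambda>i. replicate (\<alpha> i) i) (coord_list :: 'n list))"
  have La: "length La = mabs \<alpha>" unfolding La_def by (rule length_dpartial_list)
  have "cmod (dpartial \<alpha> (oconv \<Omega> T \<phi>) x) \<le> (C * V) * Rphi \<phi> powr (- real (4 * m + 2 * mabs \<alpha> + 4 * CARD('n)))"
    if \<phi>: "\<phi> \<in> Dn n" and n: "n \<ge> 1" "m + mabs \<alpha> \<le> n" and x: "cball x (Rphi \<phi>) \<subseteq> K" for n \<phi> x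
  proof -
    let ?R = "Rphi \<phi>" and ?c = "C_Omega \<Omega> \<phi>" and ?w = "iter_partial La \<phi>"
    have D: "\<phi> \<in> D0" using Dn_Rphi[OF \<phi> n(1)] by blast
    have c: "test_on \<Omega> ?c" by (rule test_on_C_Omega[OF \<Omega> D])
    have w: "smooth_on UNIV ?w" by (rule smooth_on_iter_partial[OF test_fun_smooth[OF D0_imp_test_fun[OF D]]])
    have "dpartial \<alpha> (oconv \<Omega> T \<phi>) x = cutoff_conv T ?c ?w x"
      unfolding dpartial_def oconv_eq_cutoff_conv La_def
        finite_order_operator.iter_partial[OF finite_order_operator_cutoff_conv[OF T c] D0_imp_test_fun[OF D]] ..
    also have "norm \<dots> \<le> C * (V * ?R powr (- 2 * real (m + CARD('n)))) * ?R powr (- 2 * real (m + mabs \<alpha> + CARD('n)))"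
    proof (rule C(2)[OF c w])
      show "\<forall>t. t \<notin> K \<longrightarrow> ?c t * ?w (x - t) = 0"
        using x iter_partial_eq_0_outside[of ?R \<phi> La] norm_le_Rphi[OF D]
        by (force simp: dist_norm subset_iff)
      show "\<forall>a. length a \<le> m \<longrightarrow> (\<forall>t. norm (iter_partial a ?c t) \<le> V * ?R powr (- 2 * real (m + CARD('n))))"
        unfolding V_def using n by (intro allI impI iter_partial_C_Omega_bound[OF \<Omega> \<phi> n(1)]) auto
      show "\<forall>b. length b \<le> m \<longrightarrow> (\<forall>y. norm (iter_partial b ?w y) \<le> ?R powr (- 2 * real (m + mabs \<alpha> + CARD('n))))"
        unfolding iter_partial_append[symmetric] using n La
        by (intro allI impI Dn_iter_partial_bound[OF \<phi> n(1)]) auto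
    qed
    also have "\<dots> = (C * V) * ?R powr (- real (4 * m + 2 * mabs \<alpha> + 4 * CARD('n)))"
      by (simp add: powr_add[symmetric] algebra_simps)
    finally show ?thesis .
  qed
  then show ?thesis by (intro exI[of _ "C * V"] exI[of _ m]) blast
qed

lemma compact_Union_cball:
  fixes K :: "'a::euclidean_space set"
  assumes "compact K"
  shows "compact (\<Union>x\<in>K. cball x e)"
proof -
  have "(\<Union>x\<in>K. cball x e) = {x + y | x y. x \<in> K \<and> y \<in> cball 0 e}"
  proof (intro equalityI subsetI)
    fix z assume "z \<in> (\<Union>x\<in>K. cball x e)"
    then obtain x where "x \<in> K" "dist x z \<le> e" by auto
    then show "z \<in> {x + y | x y. x \<in> K \<and> y \<in> cball 0 e}"
      by (intro CollectI exI[of _ x] exI[of _ "z - x"]) (auto simp: dist_norm)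
  qed (auto simp: dist_norm intro!: bexI)
  then show ?thesis using compact_sums[OF assms compact_cball[of 0 e]] by simp
qed

lemma moderate_oconv:
  fixes \<Omega> :: "(real^'n::finite) set"
  assumes \<Omega>: "open \<Omega>" and U: "admissible_U U" and T: "distribution \<Omega> T"
  shows "moderate U \<Omega> (\<lambda>\<phi>. oconv \<Omega> T \<phi>)"
  unfolding moderate_def
proof (intro conjI ballI allI impI)
  fix K :: "(real^'n) set" and \<alpha> :: "'n \<Rightarrow> nat" assume K: "compact K \<and> K \<subseteq> \<Omega>"
  obtain e where e: "e > 0" "(\<Union>x\<in>K. cball x e) \<subseteq> \<Omega>"
    using compact_subset_open_imp_cball_epsilon_subset[of K \<Omega>] K \<Omega> by blast
  define K' where "K' = (\<Union>x\<in>K. cball x e)"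
  have K': "compact K'" "K' \<subseteq> \<Omega>"
    unfolding K'_def using compact_Union_cball K e(2) by blast+
  obtain C m where C: "\<forall>n \<phi> x. \<phi> \<in> Dn n \<longrightarrow> n \<ge> 1 \<longrightarrow> m + mabs \<alpha> \<le> n \<longrightarrow> cball x (Rphi \<phi>) \<subseteq> K' \<longrightarrow>
       cmod (dpartial \<alpha> (oconv \<Omega> T \<phi>) x) \<le> C * Rphi \<phi> powr (- real (4 * m + 2 * mabs \<alpha> + 4 * CARD('n)))"
    using dpartial_oconv_bound[OF \<Omega> T K'] by blast
  define E where "E = 4 * m + 2 * mabs \<alpha> + 4 * CARD('n)"
  define n where "n = nat \<lceil>C\<rceil> + nat \<lceil>1 / e\<rceil> + m + mabs \<alpha> + 1"
  have n: "n \<ge> 1" "m + mabs \<alpha> \<le> n" "C \<le> real n" "1 / e \<le> real n"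
    using real_nat_ceiling_ge[of C] real_nat_ceiling_ge[of "1 / e"] unfolding n_def by linarith+
  have "ae U (\<lambda>\<phi>. \<forall>x\<in>K. cmod (dpartial \<alpha> (oconv \<Omega> T \<phi>) x) \<le> Rphi \<phi> powr (- real (E + 1)))"
  proof (rule ae_if_Dn[OF U n(1)])
    fix \<phi> :: "'n fn" assume \<phi>: "\<phi> \<in> Dn n"
    have R: "0 < Rphi \<phi>" "Rphi \<phi> \<le> 1 / real n" using Dn_Rphi[OF \<phi> n(1)] by auto
    have Re: "1 / real n \<le> e" using n(1,4) e(1) by (simp add: divide_le_eq mult.commute)
    have sub: "cball x (Rphi \<phi>) \<subseteq> K'" if "x \<in> K" for x
      using subset_cball[of "Rphi \<phi>" e x] R(2) Re that unfolding K'_def by force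
    show "\<forall>x\<in>K. cmod (dpartial \<alpha> (oconv \<Omega> T \<phi>) x) \<le> Rphi \<phi> powr (- real (E + 1))"
    proof
      fix x assume "x \<in> K"
      then have "cmod (dpartial \<alpha> (oconv \<Omega> T \<phi>) x) \<le> C * Rphi \<phi> powr (- real E)"
        unfolding E_def by (intro C[rule_format, OF \<phi> n(1,2)] sub)
      also have "\<dots> \<le> Rphi \<phi> powr (- (real E + 1))"
        by (rule mult_powr_le_powr_add_1[OF R n(1,3)])
      finally show "cmod (dpartial \<alpha> (oconv \<Omega> T \<phi>) x) \<le> Rphi \<phi> powr (- real (E + 1))"
        by (simp add: algebra_simps)
    qed
  qed
  then show "\<exists>m. ae U (\<lambda>\<phi>. \<forall>x\<in>K. cmod (dpartial \<alpha> (oconv \<Omega> T \<phi>) x) \<le> Rphi \<phi> powr (- real m))"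
    by blast
qed (rule smooth_on_oconv[OF \<Omega> T])

theorem lemma5p2:
  fixes \<Omega> :: "(real^'n::finite) set" and U :: "('n fn) set set"
  assumes "open \<Omega>" and "admissible_U U"
  shows "(\<forall>f. smooth_on \<Omega> f \<longrightarrow> moderate U \<Omega> (\<lambda>\<phi>. f)) \<and>
         (\<forall>T. distribution \<Omega> T \<longrightarrow> moderate U \<Omega> (\<lambda>\<phi>. oconv \<Omega> T \<phi>))"
  using moderate_const[OF assms(2)] moderate_oconv[OF assms] by blast

end
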